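(* Let $P$ be a strict, monotone span program on $1+n$ input bits with inner product space $V=\mathbb{C}^{[d]}$ (with standard basis $\{\lvert l\rangle\}_{l\in[d]}$), target vector $\lvert t\rangle$, and input-vector index sets $I_{1,1},\dots,I_{1+n,1}$, where $\lvert I_{1,1}\rvert=1$. For $s_1,s_2>0$, let $P'$ be either $P_{\mathrm{AND}}(s_1,s_2)$ or $P_{\mathrm{OR}}(s_1,s_2)$, and let $Q^{r\otimes}$ be the reduced tensor-product composition of $P'$ into the first input of $P$. Then $$\bigl\lVert \mathrm{abs}\bigl(B_{Q^{r\otimes}}\bigr)\bigr\rVert^2 \;\le\; \frac{\sqrt{s_1}+\sqrt{s_2}}{\sqrt{s_1+s_2}}\,\bigl\lVert \mathrm{abs}\bigl(B_{P}\bigr)\bigr\rVert^2 .$$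
   Context: A strict, monotone span program $P$ on $N$ input bits consists of a finite-dimensional inner product space $V$ over $\mathbb{C}$, a target vector $\lvert t\rangle\in V$, pairwise disjoint finite index sets $I_{k,1}$ ($k\in[N]$), and input vectors $\lvert v_i\rangle\in V$ for $i\in\bigcup_k I_{k,1}$. It computes $f_P:\{0,1\}^N\to\{0,1\}$ with $f_P(x)=1$ iff $\lvert t\rangle\in\mathrm{Span}\{\lvert v_i\rangle: i\in I_{k,1},\,x_k=1\}$. For a span program with a fixed orthonormal basis of $V$, $B_P$ denotes the matrix (in that basis) whose first column is $\lvert t\rangle$ and whose remaining columns are the input vectors $\lvert v_i\rangle$, $i\in\bigcup_k I_{k,1}$ (this is the biadjacency matrix of the associated bipartite graph on input $1^N$). $\mathrm{abs}(M)$ is the entrywise absolute value of $M$ and $\lVert\cdot\rVert$ is the operator norm. $P_{\mathrm{AND}}(s_1,s_2)$: space $\mathbb{C}^2$, target $(\alpha_1,\alpha_2)^T$, input vectors $\lvert v_1\rangle=(\beta_1,0)^T$, $\lvert v_2\rangle=(0,\beta_2)^T$, with $I_{1,1}=\{1\}$, $I_{2,1}=\{2\}$. $P_{\mathrm{OR}}(s_1,s_2)$: space $\mathbb{C}$, target $\delta$, input vectors $\lvert v_1\rangle=\epsilon_1$, $\lvert v_2\rangle=\epsilon_2$, $I_{1,1}=\{1\}$, $I_{2,1}=\{2\}$. Here $\alpha_j=\epsilon_j=(s_j/(s_1+s_2))^{1/4}$, $\beta_j=1$, $\delta=1$; both use the standard basis. Reduced tensor-product composition of $P'$ (space $V'$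 with a fixed orthonormal basis, target $\lvert t'\rangle$, input vectors $\lvert v'_{i'}\rangle$, $i'\in I'_{k,1}$, $k\in[m]$) into the first input of $P$ (space $\mathbb{C}^{[d]}$): let $Z=\{l\in[d]:\langle l\vert v_i\rangle=0\ \forall i\in I_{1,1}\}$; for $l\in[d]$ let $V_l=V'$ and $\lvert\pi_l\rangle=\lvert t'\rangle$ if $l\notin Z$, and $V_l=\mathbb{C}$, $\lvert\pi_l\rangle=\lVert\lvert t'\rangle\rVert$ if $l\in Z$. The composed program $Q^{r\otimes}$ is strict and monotone on $m+n$ bits, with space $\bigoplus_{l\in[d]}V_l$ (basis the union of the bases of the summands), target $\sum_l\langle l\vert t\rangle\lvert\pi_l\rangle_{V_l}$, input index sets $I_{11}\times I'_{k1}$ for $k\le m$ with vectors $\lvert v_{(i,i')}\rangle=\sum_l\langle l\vert v_i\rangle\lvert v'_{i'}\rangle_{V_l}$, and index sets $I_{j1}$ for the remaining inputs ($k>m$, $j=k-m+1$) with vectors $\sum_l\langle l\vert v_\iota\rangle\lvert\pi_l\rangle_{V_l}$. *)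

theory Defs
  imports Complex_Main
begin

text \<open>A strict, monotone span program in coordinates: the inner product space is the
space of functions on a finite orthonormal basis sp_basis; the target vector and the input
vectors are given by their coordinates.  Every input vector index i belongs to exactly one
index set I_{k,1}, namely k = sp_owner P i (so the index sets are pairwise disjoint).
Strictness and monotonicity are built in (only sets I_{k,1} exist).\<close>

record ('b, 'i) span_program =
  sp_basis  :: "'b set"
  sp_target :: "'b \<Rightarrow> complex"
  sp_inputs :: "'i set"
  sp_vec    :: "'i \<Rightarrow> 'b \<Rightarrow> complex"
  sp_owner  :: "'i \<Rightarrow> nat"
  sp_nbits  :: nat

definition sp_wf :: "('b, 'i) span_program \<Rightarrow> bool" where
  "sp_wf P \<longleftrightarrow> finite (sp_basis P) \<and> finite (sp_inputs P) \<and>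
     (\<forall>i\<in>sp_inputs P. sp_owner P i \<in> {1..sp_nbits P})"

definition sp_I :: "('b, 'i) span_program \<Rightarrow> nat \<Rightarrow> 'i set" where
  "sp_I P k = {i \<in> sp_inputs P. sp_owner P i = k}"

definition sp_target_norm :: "('b, 'i) span_program \<Rightarrow> real" where
  "sp_target_norm P = sqrt (\<Sum>b\<in>sp_basis P. (cmod (sp_target P b))\<^sup>2)"

text \<open>The matrix B_P: rows indexed by sp_basis P, columns by None (target) and
Some i (input vector i).\<close>
definition sp_B :: "('b, 'i) span_program \<Rightarrow> 'b \<Rightarrow> 'i option \<Rightarrow> complex" where
  "sp_B P b c = (case c of None \<Rightarrow> sp_target P b | Some i \<Rightarrow> sp_vec P i b)"

definition sp_B_cols :: "('b, 'i) span_program \<Rightarrow> 'i option set" where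
  "sp_B_cols P = insert None (Some ` sp_inputs P)"

definition op_norm :: "'r set \<Rightarrow> 'c set \<Rightarrow> ('r \<Rightarrow> 'c \<Rightarrow> complex) \<Rightarrow> real" where
  "op_norm R C M = Sup {sqrt (\<Sum>r\<in>R. (cmod (\<Sum>c\<in>C. M r c * x c))\<^sup>2) | x.
                          (\<Sum>c\<in>C. (cmod (x c))\<^sup>2) \<le> 1}"

definition mat_abs :: "('r \<Rightarrow> 'c \<Rightarrow> complex) \<Rightarrow> 'r \<Rightarrow> 'c \<Rightarrow> complex" where
  "mat_abs M = (\<lambda>r c. complex_of_real (cmod (M r c)))"

text \<open>Reduced tensor-product composition of Pp into the first input of P.
Basis of the composed space: (l, Some a) for l not in Z and a a basis element of Pp
(the copy V_l = V'), and (l, None) for l in Z (the copy V_l = C).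
Input indices: Inl (i, i') for i in I_{1,1}, i' in I'_{k,1}, k \<le> m;
Inr iota for iota in I_{j,1}, j \<ge> 2 (new input number j + m - 1).
For l in Z the coefficient of v_i (i in I_{1,1}) vanishes, so its V_l-component is 0.\<close>
definition sp_Z :: "('b, 'i) span_program \<Rightarrow> 'b set" where
  "sp_Z P = {l \<in> sp_basis P. \<forall>i\<in>sp_I P 1. sp_vec P i l = 0}"

definition reduced_tensor_compose ::
  "('b, 'i) span_program \<Rightarrow> ('b2, 'i2) span_program
     \<Rightarrow> ('b \<times> 'b2 option, ('i \<times> 'i2) + 'i) span_program" where
  "reduced_tensor_compose P Pp =
     (let Z = sp_Z P; m = sp_nbits Pp; tn = complex_of_real (sp_target_norm Pp) in
      \<lparr> sp_basis = {(l, Some a) | l a. l \<in> sp_basis P \<and> l \<notin> Z \<and> a \<in> sp_basis Pp}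
                   \<union> {(l, None) | l. l \<in> Z},
        sp_target = (\<lambda>(l, ob). case ob of Some a \<Rightarrow> sp_target P l * sp_target Pp a
                                       | None \<Rightarrow> sp_target P l * tn),
        sp_inputs = Inl ` (sp_I P 1 \<times> {i' \<in> sp_inputs Pp. sp_owner Pp i' \<in> {1..m}})
                    \<union> Inr ` {i \<in> sp_inputs P. sp_owner P i \<ge> 2},
        sp_vec = (\<lambda>c (l, ob). case c of
                    Inl (i, i') \<Rightarrow> (case ob of Some a \<Rightarrow> sp_vec P i l * sp_vec Pp i' a
                                             | None \<Rightarrow> 0)
                  | Inr i \<Rightarrow> (case ob of Some a \<Rightarrow> sp_vec P i l * sp_target Pp a
                                     | None \<Rightarrow> sp_vec P i l * tn)),
        sp_owner = (\<lambda>c. case c of Inl (i, i') \<Rightarrow> sp_owner Pp i'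
                                | Inr i \<Rightarrow> sp_owner P i + m - 1),
        sp_nbits = m + sp_nbits P - 1 \<rparr>)"

definition P_AND :: "real \<Rightarrow> real \<Rightarrow> (nat, nat) span_program" where
  "P_AND s1 s2 =
     \<lparr> sp_basis = {0, 1},
       sp_target = (\<lambda>b. if b = 0 then complex_of_real (root 4 (s1 / (s1 + s2)))
                        else if b = 1 then complex_of_real (root 4 (s2 / (s1 + s2))) else 0),
       sp_inputs = {1, 2},
       sp_vec = (\<lambda>i b. if i = 1 \<and> b = 0 then 1 else if i = 2 \<and> b = 1 then 1 else 0),
       sp_owner = (\<lambda>i. i),
       sp_nbits = 2 \<rparr>"

definition P_OR :: "real \<Rightarrow> real \<Rightarrow> (nat, nat) span_program" where
  "P_OR s1 s2 =
     \<lparr> sp_basis = {0},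
       sp_target = (\<lambda>b. 1),
       sp_inputs = {1, 2},
       sp_vec = (\<lambda>i b. if i = 1 then complex_of_real (root 4 (s1 / (s1 + s2)))
                      else if i = 2 then complex_of_real (root 4 (s2 / (s1 + s2))) else 0),
       sp_owner = (\<lambda>i. i),
       sp_nbits = 2 \<rparr>"

end

theory Submission
  imports Defs
begin

text \<open>Fix a unit vector x on the columns of B_Q and let Y be the moduli of its entries on
  the new columns (i0, i'). Merging these columns into the single column i0 of B_P, with
  entry |Y|, gives a unit vector for B_P. Row l of abs(B_P) applied to it is U l + W l |Y|,
  where W l is the modulus of the l-th entry of the first input vector of P and U l collects
  the target and the remaining inputs; the rows (l, a) of abs(B_Q) applied to abs(x) are
  |t'_a| U l + W l (sum over i' of |v'_i'(a)| Y i'), and the rows (l, None), l in Z, are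
  |t'| U l. Hence it suffices that P' satisfies composition_gain_le with
  c = (sqrt s1 + sqrt s2) / sqrt (s1 + s2), which is q1^2 + q2^2 >= 1 for the fourth roots
  q_j in P_AND and P_OR; for both this reduces to Cauchy-Schwarz, q1 Y1 + q2 Y2 <= sqrt c |Y|.\<close>

definition mat_vec_norm ::
  "'r set \<Rightarrow> 'c set \<Rightarrow> ('r \<Rightarrow> 'c \<Rightarrow> complex) \<Rightarrow> ('c \<Rightarrow> complex) \<Rightarrow> real" where
  "mat_vec_norm R C M x = sqrt (\<Sum>r\<in>R. (cmod (\<Sum>c\<in>C. M r c * x c))\<^sup>2)"

lemma op_norm_eq_Sup_mat_vec_norm:
  "op_norm R C M = Sup (mat_vec_norm R C M ` {x. (\<Sum>c\<in>C. (cmod (x c))\<^sup>2) \<le> 1})"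
  unfolding op_norm_def mat_vec_norm_def by (rule arg_cong[where f = Sup]) auto

lemma mat_vec_norm_le_abs:
  "mat_vec_norm R C M x \<le> sqrt (\<Sum>r\<in>R. (\<Sum>c\<in>C. cmod (M r c) * cmod (x c))\<^sup>2)"
proof -
  have "cmod (\<Sum>c\<in>C. M r c * x c) \<le> (\<Sum>c\<in>C. cmod (M r c) * cmod (x c))" for r
    using norm_sum[of "\<lambda>c. M r c * x c" C] by (simp add: norm_mult)
  then show ?thesis
    unfolding mat_vec_norm_def by (intro real_sqrt_le_mono sum_mono power_mono) auto
qed

lemma cmod_le_1_of_sum_sq_le_1:
  assumes "finite C" "c \<in> C" "(\<Sum>c\<in>C. (cmod (x c))\<^sup>2) \<le> 1"
  shows "cmod (x c) \<le> 1"
proof -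
  have "(cmod (x c))\<^sup>2 \<le> (\<Sum>c\<in>C. (cmod (x c))\<^sup>2)"
    using assms(1,2) by (intro member_le_sum) auto
  with assms(3) have "(cmod (x c))\<^sup>2 \<le> 1\<^sup>2" by simp
  then show ?thesis by (rule power2_le_imp_le) simp
qed

lemma bdd_above_mat_vec_norm:
  assumes "finite C"
  shows "bdd_above (mat_vec_norm R C M ` {x. (\<Sum>c\<in>C. (cmod (x c))\<^sup>2) \<le> 1})"
proof (rule bdd_aboveI2)
  fix x assume "x \<in> {x. (\<Sum>c\<in>C. (cmod (x c))\<^sup>2) \<le> 1}"
  then have "cmod (M r c) * cmod (x c) \<le> cmod (M r c)" if "c \<in> C" for r c
    using cmod_le_1_of_sum_sq_le_1[OF assms that] by (simp add: mult_left_le)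
  then have "sqrt (\<Sum>r\<in>R. (\<Sum>c\<in>C. cmod (M r c) * cmod (x c))\<^sup>2)
      \<le> sqrt (\<Sum>r\<in>R. (\<Sum>c\<in>C. cmod (M r c))\<^sup>2)"
    by (intro real_sqrt_le_mono sum_mono power_mono) (auto intro: sum_nonneg)
  with mat_vec_norm_le_abs
  show "mat_vec_norm R C M x \<le> sqrt (\<Sum>r\<in>R. (\<Sum>c\<in>C. cmod (M r c))\<^sup>2)"
    by (rule order_trans)
qed

lemma mat_vec_norm_le_op_norm:
  assumes "finite C" "(\<Sum>c\<in>C. (cmod (x c))\<^sup>2) \<le> 1"
  shows "mat_vec_norm R C M x \<le> op_norm R C M"
  unfolding op_norm_eq_Sup_mat_vec_norm
  using assms by (intro cSup_upper bdd_above_mat_vec_norm) auto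

lemma op_norm_nonneg:
  assumes "finite C"
  shows "0 \<le> op_norm R C M"
  using mat_vec_norm_le_op_norm[OF assms, of "\<lambda>_. 0" R M] by (simp add: mat_vec_norm_def)

lemma op_norm_le:
  assumes "\<And>x. (\<Sum>c\<in>C. (cmod (x c))\<^sup>2) \<le> 1 \<Longrightarrow> mat_vec_norm R C M x \<le> K"
  shows "op_norm R C M \<le> K"
  unfolding op_norm_eq_Sup_mat_vec_norm
  by (rule cSup_least) (use assms in \<open>auto intro!: exI[of _ "\<lambda>_. 0"]\<close>)

lemma finite_B_cols: "finite (sp_inputs P) \<Longrightarrow> finite (sp_B_cols P)"
  by (simp add: sp_B_cols_def)

lemma sum_B_cols:
  assumes "finite (sp_inputs P)"
  shows "(\<Sum>c\<in>sp_B_cols P. g c) = g None + (\<Sum>i\<in>sp_inputs P. g (Some i))"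
  using assms by (simp add: sp_B_cols_def sum.reindex)

lemma sp_target_norm_nonneg: "0 \<le> sp_target_norm P"
  by (simp add: sp_target_norm_def sum_nonneg)

definition composition_gain_le :: "('b, 'i) span_program \<Rightarrow> real \<Rightarrow> bool" where
  "composition_gain_le Pp c \<longleftrightarrow>
     (\<forall>U W Y. 0 \<le> U \<longrightarrow> 0 \<le> W \<longrightarrow> (\<forall>i. 0 \<le> Y i) \<longrightarrow>
        (\<Sum>a\<in>sp_basis Pp. (cmod (sp_target Pp a) * U
                            + W * (\<Sum>i\<in>sp_inputs Pp. cmod (sp_vec Pp i a) * Y i))\<^sup>2)
        \<le> c * (U + W * sqrt (\<Sum>i\<in>sp_inputs Pp. (Y i)\<^sup>2))\<^sup>2)"

lemma composition_gain_leD: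
  assumes "composition_gain_le Pp c" "0 \<le> U" "0 \<le> W" "\<And>i. 0 \<le> Y i"
  shows "(\<Sum>a\<in>sp_basis Pp. (cmod (sp_target Pp a) * U
                              + W * (\<Sum>i\<in>sp_inputs Pp. cmod (sp_vec Pp i a) * Y i))\<^sup>2)
           \<le> c * (U + W * sqrt (\<Sum>i\<in>sp_inputs Pp. (Y i)\<^sup>2))\<^sup>2"
  using assms unfolding composition_gain_le_def by blast

lemma composition_gain_le_target_norm:
  assumes "composition_gain_le Pp c"
  shows "(sp_target_norm Pp)\<^sup>2 \<le> c"
  using composition_gain_leD[OF assms, of 1 0 "\<lambda>_. 0"]
  by (simp add: sp_target_norm_def sum_nonneg)

lemma composition_gain_le_nonneg:
  assumes "composition_gain_le Pp c"
  shows "0 \<le> c"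
  using zero_le_power2 composition_gain_le_target_norm[OF assms] by (rule order_trans)

lemma sum_two_squares_Cauchy_Schwarz:
  fixes a1 a2 y1 y2 :: real
  shows "a1 * y1 + a2 * y2 \<le> sqrt (a1\<^sup>2 + a2\<^sup>2) * sqrt (y1\<^sup>2 + y2\<^sup>2)"
proof -
  have "(a1 * y1 + a2 * y2)\<^sup>2 \<le> (a1\<^sup>2 + a2\<^sup>2) * (y1\<^sup>2 + y2\<^sup>2)"
    using sum_squares_ge_zero[of "a1 * y2 - a2 * y1" 0]
    by (simp add: power2_eq_square algebra_simps)
  then show ?thesis
    by (metis real_le_rsqrt real_sqrt_mult)
qed

lemma AND_gain_ineq:
  fixes q1 q2 U W Y1 Y2 c :: real
  assumes "0 \<le> U" "0 \<le> W" "q1\<^sup>2 + q2\<^sup>2 = c" "1 \<le> c"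
  shows "(q1 * U + W * Y1)\<^sup>2 + (q2 * U + W * Y2)\<^sup>2 \<le> c * (U + W * sqrt (Y1\<^sup>2 + Y2\<^sup>2))\<^sup>2"
proof -
  define Y where "Y = sqrt (Y1\<^sup>2 + Y2\<^sup>2)"
  have "q1 * Y1 + q2 * Y2 \<le> sqrt c * Y"
    using sum_two_squares_Cauchy_Schwarz[of q1 Y1 q2 Y2] assms(3) by (simp add: Y_def)
  also have "\<dots> \<le> c * Y"
  proof (intro mult_right_mono)
    show "sqrt c \<le> c"
      using assms(4) by (intro real_le_lsqrt) (auto simp: power2_eq_square)
  qed (simp add: Y_def)
  finally have cross: "2 * (U * W) * (q1 * Y1 + q2 * Y2) \<le> 2 * (U * W) * (c * Y)"
    using assms(1,2) by (intro mult_left_mono) auto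
  have "1 * (W\<^sup>2 * Y\<^sup>2) \<le> c * (W\<^sup>2 * Y\<^sup>2)"
    using assms(4) by (intro mult_right_mono) auto
  have "(q1 * U + W * Y1)\<^sup>2 + (q2 * U + W * Y2)\<^sup>2
      = c * U\<^sup>2 + 2 * (U * W) * (q1 * Y1 + q2 * Y2) + W\<^sup>2 * Y\<^sup>2"
    by (simp add: Y_def power2_eq_square algebra_simps flip: assms(3))
  also have "\<dots> \<le> c * U\<^sup>2 + 2 * (U * W) * (c * Y) + c * (W\<^sup>2 * Y\<^sup>2)"
    using cross \<open>1 * (W\<^sup>2 * Y\<^sup>2) \<le> c * (W\<^sup>2 * Y\<^sup>2)\<close> by linarith
  also have "\<dots> = c * (U + W * Y)\<^sup>2"
    by (simp add: power2_eq_square algebra_simps)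
  finally show ?thesis by (simp add: Y_def)
qed

lemma OR_gain_ineq:
  fixes q1 q2 U W Y1 Y2 c :: real
  assumes "0 \<le> U" "0 \<le> W" "q1\<^sup>2 + q2\<^sup>2 = c" "1 \<le> c"
  shows "(U + W * (q1 * Y1 + q2 * Y2))\<^sup>2 \<le> c * (U + W * sqrt (Y1\<^sup>2 + Y2\<^sup>2))\<^sup>2"
proof -
  define Y where "Y = sqrt (Y1\<^sup>2 + Y2\<^sup>2)"
  define p where "p = q1 * Y1 + q2 * Y2"
  have "\<bar>p\<bar> \<le> sqrt c * Y"
    using sum_two_squares_Cauchy_Schwarz[of q1 Y1 q2 Y2]
      sum_two_squares_Cauchy_Schwarz[of "- q1" Y1 "- q2" Y2] assms(3)
    by (simp add: p_def Y_def abs_le_iff)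
  have "\<bar>U + W * p\<bar> \<le> U + W * \<bar>p\<bar>"
    using abs_triangle_ineq[of U "W * p"] assms(1,2) by (simp add: abs_mult)
  also have "\<dots> \<le> sqrt c * U + W * (sqrt c * Y)"
  proof (intro add_mono mult_left_mono)
    show "U \<le> sqrt c * U"
      using assms(1,4) mult_right_mono[of 1 "sqrt c" U] by simp
  qed (use \<open>\<bar>p\<bar> \<le> sqrt c * Y\<close> assms(2) in auto)
  also have "\<dots> = sqrt c * (U + W * Y)"
    by (simp add: algebra_simps)
  finally have "(U + W * p)\<^sup>2 \<le> (sqrt c * (U + W * Y))\<^sup>2"
    by (metis abs_ge_zero power2_abs power_mono)
  also have "\<dots> = c * (U + W * Y)\<^sup>2"
    using assms(4) by (simp add: power_mult_distrib)
  finally show ?thesis by (simp add: p_def Y_def)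
qed

lemma root4_sq: "0 \<le> x \<Longrightarrow> (root 4 x)\<^sup>2 = sqrt x"
  using real_root_mult_exp[of 2 2 x] by (simp add: sqrt_def)

lemma root4_weights_sq_sum:
  fixes s1 s2 :: real
  assumes "0 < s1" "0 < s2"
  shows "(root 4 (s1 / (s1 + s2)))\<^sup>2 + (root 4 (s2 / (s1 + s2)))\<^sup>2
           = (sqrt s1 + sqrt s2) / sqrt (s1 + s2)"
  using assms by (simp add: root4_sq real_sqrt_divide add_divide_distrib)

lemma one_le_sqrt_sum_div_sqrt:
  fixes s1 s2 :: real
  assumes "0 < s1" "0 < s2"
  shows "1 \<le> (sqrt s1 + sqrt s2) / sqrt (s1 + s2)"
  using assms sqrt_add_le_add_sqrt[of s1 s2] by simp

lemma composition_gain_le_P_AND: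
  assumes "0 < s1" "0 < s2"
  shows "composition_gain_le (P_AND s1 s2) ((sqrt s1 + sqrt s2) / sqrt (s1 + s2))"
proof -
  have "0 \<le> root 4 (s1 / (s1 + s2))" "0 \<le> root 4 (s2 / (s1 + s2))"
    using assms by simp_all
  then show ?thesis
    unfolding composition_gain_le_def
    using AND_gain_ineq[OF _ _ root4_weights_sq_sum[OF assms] one_le_sqrt_sum_div_sqrt[OF assms]]
    by (simp add: P_AND_def)
qed

lemma composition_gain_le_P_OR:
  assumes "0 < s1" "0 < s2"
  shows "composition_gain_le (P_OR s1 s2) ((sqrt s1 + sqrt s2) / sqrt (s1 + s2))"
proof -
  have "0 \<le> root 4 (s1 / (s1 + s2))" "0 \<le> root 4 (s2 / (s1 + s2))"
    using assms by simp_all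
  then show ?thesis
    unfolding composition_gain_le_def
    using OR_gain_ineq[OF _ _ root4_weights_sq_sum[OF assms] one_le_sqrt_sum_div_sqrt[OF assms]]
    by (simp add: P_OR_def)
qed

lemma sp_wf_P_AND: "sp_wf (P_AND s1 s2)"
  by (simp add: sp_wf_def P_AND_def)

lemma sp_wf_P_OR: "sp_wf (P_OR s1 s2)"
  by (simp add: sp_wf_def P_OR_def)

locale first_input_composition =
  fixes P :: "('b, 'i) span_program" and Pp :: "('b2, 'i2) span_program" and i0 :: 'i
  assumes wf_P: "sp_wf P" and wf_Pp: "sp_wf Pp" and first_input: "sp_I P 1 = {i0}"
begin

abbreviation Q :: "('b \<times> 'b2 option, ('i \<times> 'i2) + 'i) span_program" where
  "Q \<equiv> reduced_tensor_compose P Pp"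

definition later_inputs :: "'i set" where
  "later_inputs = {i \<in> sp_inputs P. 2 \<le> sp_owner P i}"

lemma i0_in_inputs: "i0 \<in> sp_inputs P" and owner_i0: "sp_owner P i0 = 1"
  using first_input unfolding sp_I_def by auto

lemma i0_notin_later_inputs: "i0 \<notin> later_inputs"
  by (simp add: later_inputs_def owner_i0)

lemma inputs_P_eq: "sp_inputs P = insert i0 later_inputs"
proof -
  have "i \<in> later_inputs" if "i \<in> sp_inputs P" "i \<noteq> i0" for i
  proof -
    have "sp_owner P i \<noteq> 1"
      using that first_input by (auto simp: sp_I_def)
    moreover have "1 \<le> sp_owner P i"
      using that(1) wf_P by (auto simp: sp_wf_def)
    ultimately show ?thesis
      using that(1) by (simp add: later_inputs_def)
  qed
  then show ?thesis
    using i0_in_inputs by (auto simp: later_inputs_def)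
qed

lemma finite_later_inputs: "finite later_inputs"
  using wf_P by (simp add: sp_wf_def later_inputs_def)

lemma inputs_Q_eq:
  "sp_inputs Q = (\<lambda>i'. Inl (i0, i')) ` sp_inputs Pp \<union> Inr ` later_inputs"
proof -
  have "{i' \<in> sp_inputs Pp. sp_owner Pp i' \<in> {1..sp_nbits Pp}} = sp_inputs Pp"
    using wf_Pp by (auto simp: sp_wf_def)
  then show ?thesis
    unfolding reduced_tensor_compose_def Let_def first_input later_inputs_def by auto
qed

lemma sum_B_cols_P:
  "(\<Sum>c\<in>sp_B_cols P. g c) = g None + g (Some i0) + (\<Sum>i\<in>later_inputs. g (Some i))"
  using finite_later_inputs i0_notin_later_inputs
  by (simp add: sum_B_cols inputs_P_eq add.assoc)

lemma sum_B_cols_Q: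
  "(\<Sum>c\<in>sp_B_cols Q. f c)
     = f None + (\<Sum>i'\<in>sp_inputs Pp. f (Some (Inl (i0, i')))) + (\<Sum>i\<in>later_inputs. f (Some (Inr i)))"
proof -
  have fin: "finite (sp_inputs Pp)"
    using wf_Pp by (simp add: sp_wf_def)
  have "(\<Sum>c\<in>sp_inputs Q. f (Some c))
      = (\<Sum>c\<in>(\<lambda>i'. Inl (i0, i')) ` sp_inputs Pp. f (Some c)) + (\<Sum>c\<in>Inr ` later_inputs. f (Some c))"
    unfolding inputs_Q_eq using fin finite_later_inputs by (intro sum.union_disjoint) auto
  also have "\<dots> = (\<Sum>i'\<in>sp_inputs Pp. f (Some (Inl (i0, i')))) + (\<Sum>i\<in>later_inputs. f (Some (Inr i)))"
    by (simp add: sum.reindex inj_on_def)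
  finally show ?thesis
    using fin finite_later_inputs by (simp add: sum_B_cols inputs_Q_eq add.assoc)
qed

lemma sum_basis_Q:
  "(\<Sum>r\<in>sp_basis Q. F r)
     = (\<Sum>l\<in>sp_basis P - sp_Z P. \<Sum>a\<in>sp_basis Pp. F (l, Some a)) + (\<Sum>l\<in>sp_Z P. F (l, None))"
proof -
  let ?B = "(sp_basis P - sp_Z P) \<times> sp_basis Pp"
  have fin: "finite (sp_basis P)" "finite (sp_basis Pp)" "finite (sp_Z P)"
    using wf_P wf_Pp by (auto simp: sp_wf_def sp_Z_def)
  have "sp_basis Q = (\<lambda>(l, a). (l, Some a)) ` ?B \<union> (\<lambda>l. (l, None)) ` sp_Z P"
    by (auto simp: reduced_tensor_compose_def Let_def sp_Z_def)
  then have "(\<Sum>r\<in>sp_basis Q. F r)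
      = (\<Sum>r\<in>(\<lambda>(l, a). (l, Some a)) ` ?B. F r) + (\<Sum>r\<in>(\<lambda>l. (l, None)) ` sp_Z P. F r)"
    using fin by (simp only:) (intro sum.union_disjoint; auto)
  also have "\<dots> = (\<Sum>(l, a)\<in>?B. F (l, Some a)) + (\<Sum>l\<in>sp_Z P. F (l, None))"
    by (simp add: sum.reindex inj_on_def case_prod_unfold)
  finally show ?thesis
    by (simp add: sum.cartesian_product)
qed

definition outer_mass :: "((('i \<times> 'i2) + 'i) option \<Rightarrow> complex) \<Rightarrow> 'b \<Rightarrow> real" where
  "outer_mass x l = cmod (sp_target P l) * cmod (x None)
     + (\<Sum>i\<in>later_inputs. cmod (sp_vec P i l) * cmod (x (Some (Inr i))))"

definition inner_moduli :: "((('i \<times> 'i2) + 'i) option \<Rightarrow> complex) \<Rightarrow> 'i2 \<Rightarrow> real" where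
  "inner_moduli x i' = cmod (x (Some (Inl (i0, i'))))"

definition collapsed_vector :: "((('i \<times> 'i2) + 'i) option \<Rightarrow> complex) \<Rightarrow> 'i option \<Rightarrow> complex" where
  "collapsed_vector x c = complex_of_real (case c of
       None \<Rightarrow> cmod (x None)
     | Some i \<Rightarrow> if i = i0 then sqrt (\<Sum>i'\<in>sp_inputs Pp. (inner_moduli x i')\<^sup>2)
                 else cmod (x (Some (Inr i))))"

lemma sum_sq_collapsed_vector:
  "(\<Sum>c\<in>sp_B_cols P. (cmod (collapsed_vector x c))\<^sup>2) = (\<Sum>c\<in>sp_B_cols Q. (cmod (x c))\<^sup>2)"
proof -
  have "(\<Sum>i\<in>later_inputs. (cmod (collapsed_vector x (Some i)))\<^sup>2)
      = (\<Sum>i\<in>later_inputs. (cmod (x (Some (Inr i))))\<^sup>2)"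
    using i0_notin_later_inputs by (intro sum.cong) (auto simp: collapsed_vector_def)
  then show ?thesis
    unfolding sum_B_cols_P sum_B_cols_Q
    by (simp add: collapsed_vector_def inner_moduli_def sum_nonneg)
qed

lemma row_abs_B_P_collapsed_vector:
  "(\<Sum>c\<in>sp_B_cols P. mat_abs (sp_B P) l c * collapsed_vector x c)
     = complex_of_real (outer_mass x l
         + cmod (sp_vec P i0 l) * sqrt (\<Sum>i'\<in>sp_inputs Pp. (inner_moduli x i')\<^sup>2))"
proof -
  have "(\<Sum>i\<in>later_inputs. mat_abs (sp_B P) l (Some i) * collapsed_vector x (Some i))
      = (\<Sum>i\<in>later_inputs. complex_of_real (cmod (sp_vec P i l) * cmod (x (Some (Inr i)))))"
    using i0_notin_later_inputs
    by (intro sum.cong) (auto simp: collapsed_vector_def mat_abs_def sp_B_def)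
  then show ?thesis
    unfolding sum_B_cols_P
    by (simp add: collapsed_vector_def mat_abs_def sp_B_def outer_mass_def of_real_sum)
qed

lemma row_abs_B_Q_Some:
  "(\<Sum>c\<in>sp_B_cols Q. cmod (sp_B Q (l, Some a) c) * cmod (x c))
     = cmod (sp_target Pp a) * outer_mass x l
       + cmod (sp_vec P i0 l) * (\<Sum>i'\<in>sp_inputs Pp. cmod (sp_vec Pp i' a) * inner_moduli x i')"
  unfolding sum_B_cols_Q outer_mass_def inner_moduli_def
  by (simp add: sp_B_def reduced_tensor_compose_def Let_def norm_mult sum_distrib_left distrib_left mult_ac)

lemma row_abs_B_Q_None:
  "(\<Sum>c\<in>sp_B_cols Q. cmod (sp_B Q (l, None) c) * cmod (x c)) = sp_target_norm Pp * outer_mass x l"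
  unfolding sum_B_cols_Q outer_mass_def
  using sp_target_norm_nonneg[of Pp]
  by (simp add: sp_B_def reduced_tensor_compose_def Let_def norm_mult sum_distrib_left distrib_left mult_ac)

lemma sum_sq_row_abs_B_Q_le:
  assumes gain: "composition_gain_le Pp c"
  shows "(\<Sum>r\<in>sp_basis Q. (\<Sum>c\<in>sp_B_cols Q. cmod (sp_B Q r c) * cmod (x c))\<^sup>2)
           \<le> c * (\<Sum>l\<in>sp_basis P. (outer_mass x l + cmod (sp_vec P i0 l)
                 * sqrt (\<Sum>i'\<in>sp_inputs Pp. (inner_moduli x i')\<^sup>2))\<^sup>2)"
proof -
  define U where "U = outer_mass x"
  define W where "W l = cmod (sp_vec P i0 l)" for l
  define Y where "Y = sqrt (\<Sum>i'\<in>sp_inputs Pp. (inner_moduli x i')\<^sup>2)"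
  let ?row = "\<lambda>r. \<Sum>c\<in>sp_B_cols Q. cmod (sp_B Q r c) * cmod (x c)"
  have U_nonneg: "0 \<le> U l" for l
    by (simp add: U_def outer_mass_def sum_nonneg)
  have "(\<Sum>r\<in>sp_basis Q. (?row r)\<^sup>2)
      \<le> (\<Sum>l\<in>sp_basis P - sp_Z P. c * (U l + W l * Y)\<^sup>2) + (\<Sum>l\<in>sp_Z P. c * (U l + W l * Y)\<^sup>2)"
    unfolding sum_basis_Q
  proof (intro add_mono sum_mono)
    fix l
    show "(\<Sum>a\<in>sp_basis Pp. (?row (l, Some a))\<^sup>2) \<le> c * (U l + W l * Y)\<^sup>2"
      using composition_gain_leD[OF gain U_nonneg, of "W l" "inner_moduli x"]
      by (simp add: row_abs_B_Q_Some U_def W_def Y_def inner_moduli_def)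
  next
    fix l assume "l \<in> sp_Z P"
    then have "W l = 0"
      unfolding sp_Z_def first_input by (simp add: W_def)
    moreover have "(sp_target_norm Pp * U l)\<^sup>2 \<le> c * (U l)\<^sup>2"
      using composition_gain_le_target_norm[OF gain]
      by (simp add: power_mult_distrib mult_right_mono)
    ultimately show "(?row (l, None))\<^sup>2 \<le> c * (U l + W l * Y)\<^sup>2"
      by (simp add: row_abs_B_Q_None U_def)
  qed
  also have "\<dots> = c * (\<Sum>l\<in>sp_basis P. (U l + W l * Y)\<^sup>2)"
  proof -
    have "sp_Z P \<subseteq> sp_basis P" "finite (sp_basis P)"
      using wf_P by (auto simp: sp_Z_def sp_wf_def)
    then show ?thesis
      by (simp add: sum.subset_diff[of "sp_Z P" "sp_basis P"] distrib_left sum_distrib_left)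
  qed
  finally show ?thesis
    by (simp add: U_def W_def Y_def)
qed

lemma mat_vec_norm_abs_B_Q_le:
  assumes "composition_gain_le Pp c"
  shows "mat_vec_norm (sp_basis Q) (sp_B_cols Q) (mat_abs (sp_B Q)) x
           \<le> sqrt c * mat_vec_norm (sp_basis P) (sp_B_cols P) (mat_abs (sp_B P)) (collapsed_vector x)"
proof -
  have "mat_vec_norm (sp_basis Q) (sp_B_cols Q) (mat_abs (sp_B Q)) x
      \<le> sqrt (\<Sum>r\<in>sp_basis Q. (\<Sum>c\<in>sp_B_cols Q. cmod (sp_B Q r c) * cmod (x c))\<^sup>2)"
    using mat_vec_norm_le_abs[of _ _ "mat_abs (sp_B Q)"] by (simp add: mat_abs_def)
  also have "\<dots> \<le> sqrt (c * (\<Sum>l\<in>sp_basis P. (outer_mass x l + cmod (sp_vec P i0 l)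
                 * sqrt (\<Sum>i'\<in>sp_inputs Pp. (inner_moduli x i')\<^sup>2))\<^sup>2))"
    using sum_sq_row_abs_B_Q_le[OF assms] by (rule real_sqrt_le_mono)
  also have "\<dots> = sqrt c * mat_vec_norm (sp_basis P) (sp_B_cols P) (mat_abs (sp_B P)) (collapsed_vector x)"
    unfolding mat_vec_norm_def row_abs_B_P_collapsed_vector norm_of_real power2_abs real_sqrt_mult ..
  finally show ?thesis .
qed

lemma op_norm_abs_B_Q_le:
  assumes "composition_gain_le Pp c"
  shows "op_norm (sp_basis Q) (sp_B_cols Q) (mat_abs (sp_B Q))
           \<le> sqrt c * op_norm (sp_basis P) (sp_B_cols P) (mat_abs (sp_B P))"
proof (rule op_norm_le)
  fix x assume "(\<Sum>c\<in>sp_B_cols Q. (cmod (x c))\<^sup>2) \<le> 1"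
  then have "mat_vec_norm (sp_basis P) (sp_B_cols P) (mat_abs (sp_B P)) (collapsed_vector x)
      \<le> op_norm (sp_basis P) (sp_B_cols P) (mat_abs (sp_B P))"
    using wf_P by (intro mat_vec_norm_le_op_norm finite_B_cols)
      (simp_all add: sum_sq_collapsed_vector sp_wf_def)
  then show "mat_vec_norm (sp_basis Q) (sp_B_cols Q) (mat_abs (sp_B Q)) x
      \<le> sqrt c * op_norm (sp_basis P) (sp_B_cols P) (mat_abs (sp_B P))"
    using mat_vec_norm_abs_B_Q_le[OF assms, of x]
    by (meson order_trans mult_left_mono real_sqrt_ge_zero composition_gain_le_nonneg[OF assms])
qed

lemma op_norm_abs_B_Q_sq_le:
  assumes "composition_gain_le Pp c"
  shows "(op_norm (sp_basis Q) (sp_B_cols Q) (mat_abs (sp_B Q)))\<^sup>2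
           \<le> c * (op_norm (sp_basis P) (sp_B_cols P) (mat_abs (sp_B P)))\<^sup>2"
proof -
  have "finite (sp_B_cols Q)"
    using wf_Pp finite_later_inputs by (intro finite_B_cols) (simp add: inputs_Q_eq sp_wf_def)
  then have "(op_norm (sp_basis Q) (sp_B_cols Q) (mat_abs (sp_B Q)))\<^sup>2
      \<le> (sqrt c * op_norm (sp_basis P) (sp_B_cols P) (mat_abs (sp_B P)))\<^sup>2"
    by (intro power_mono op_norm_abs_B_Q_le assms op_norm_nonneg)
  then show ?thesis
    using composition_gain_le_nonneg[OF assms] by (simp add: power_mult_distrib)
qed

end

theorem lemma3p4:
  fixes P :: "(nat, 'i) span_program" and d n :: nat and s1 s2 :: real
    and Pp :: "(nat, nat) span_program"
  assumes "sp_wf P"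
    and "sp_basis P = {0..<d}"
    and "sp_nbits P = 1 + n"
    and "card (sp_I P 1) = 1"
    and "s1 > 0" and "s2 > 0"
    and "Pp = P_AND s1 s2 \<or> Pp = P_OR s1 s2"
  shows "(op_norm (sp_basis (reduced_tensor_compose P Pp))
                  (sp_B_cols (reduced_tensor_compose P Pp))
                  (mat_abs (sp_B (reduced_tensor_compose P Pp))))\<^sup>2
         \<le> (sqrt s1 + sqrt s2) / sqrt (s1 + s2)
             * (op_norm (sp_basis P) (sp_B_cols P) (mat_abs (sp_B P)))\<^sup>2"
proof -
  obtain i0 where "sp_I P 1 = {i0}"
    using assms(4) card_1_singletonE by blast
  moreover have "sp_wf Pp"
    using assms(7) sp_wf_P_AND sp_wf_P_OR by blast
  ultimately interpret first_input_composition P Pp i0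
    using assms(1) by unfold_locales
  have "composition_gain_le Pp ((sqrt s1 + sqrt s2) / sqrt (s1 + s2))"
    using assms(5-7) composition_gain_le_P_AND composition_gain_le_P_OR by blast
  then show ?thesis
    by (rule op_norm_abs_B_Q_sq_le)
qed

end
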